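(* Let $k:[1,\infty)\to(0,\infty)$ be a nonincreasing function such that $\int_1^\infty\frac{k(s)}{s}\,ds<\frac1{10}$. Let $x:[1,\infty)\to(0,\infty)$ be a differentiable function such that for all $t\ge1$, $$x(t)\le t\,x(1)\quad\text{and}\quad x'(t)\le\int_t^\infty x(s)\frac{k(s)}{s^2}\,ds.$$ Then there exists a constant $C>0$ depending only on $k$ such that $x(t)\le C\,x(1)$ for all $t\ge1$. *)

theory Defs
  imports "HOL-Analysis.Analysis"
begin

end

theory Submission
  imports Defs
begin

text \<open>
  Write \<open>I = \<integral>\<^sub>1\<^sup>\<infinity> k(s)/s ds\<close> and \<open>a = x(1)\<close>. A linear bound \<open>x(s) \<le> a (C + e s)\<close>, inserted
  into the hypothesis on \<open>x'\<close> and combined with the monotonicity of \<open>k\<close>, gives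
  \<open>x'(u) \<le> a C k(u)/u + a e I\<close>; integrating from \<open>1\<close> to \<open>t\<close> improves it to
  \<open>x(t) \<le> a (1 + C I) + a e I t\<close>. For \<open>C = 1/(1 - I)\<close> we have \<open>1 + C I = C\<close>, so the
  slope \<open>e\<close> is multiplied by \<open>I\<close> while \<open>C\<close> stays fixed. Starting from \<open>x(t) \<le> a t\<close> we get
  \<open>x(t) \<le> a (C + I\<^sup>n t)\<close> for every \<open>n\<close>, hence \<open>x(t) \<le> C a\<close>.
\<close>

lemma increment_le_integral_if_deriv_le:
  fixes f f' g :: "real \<Rightarrow> real"
  assumes "a \<le> b"
    and deriv: "\<And>s. s \<in> {a..b} \<Longrightarrow> (f has_real_derivative f' s) (at s within {a..b})"
    and g: "(g has_integral G) {a..b}"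
    and le: "\<And>s. s \<in> {a..b} \<Longrightarrow> f' s \<le> g s"
  shows "f b - f a \<le> G"
proof -
  have "(f' has_integral (f b - f a)) {a..b}"
    using \<open>a \<le> b\<close> deriv
    by (intro fundamental_theorem_of_calculus)
       (simp_all add: has_real_derivative_iff_has_vector_derivative)
  then show ?thesis
    using g le by (rule has_integral_le)
qed

lemma nonneg_integrable_on_atLeast_mono:
  fixes f :: "real \<Rightarrow> real"
  assumes f: "f integrable_on {a..}"
    and nonneg: "\<And>s. a \<le> s \<Longrightarrow> 0 \<le> f s"
    and "a \<le> b"
  shows "f integrable_on {b..}" and "integral {b..} f \<le> integral {a..} f"
proof -
  have "f absolutely_integrable_on {a..}"
    using f nonneg by (intro nonnegative_absolutely_integrable_1) auto
  then have "f absolutely_integrable_on {b..}"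
    by (rule set_integrable_subset) (use \<open>a \<le> b\<close> in auto)
  then show fb: "f integrable_on {b..}"
    by (simp add: absolutely_integrable_on_def)
  show "integral {b..} f \<le> integral {a..} f"
    by (rule integral_subset_le[OF _ fb f]) (use \<open>a \<le> b\<close> nonneg in auto)
qed

locale nonincreasing_kernel =
  fixes k :: "real \<Rightarrow> real"
  assumes k_pos: "\<And>s. 1 \<le> s \<Longrightarrow> 0 < k s"
    and k_antimono: "\<And>s t. 1 \<le> s \<Longrightarrow> s \<le> t \<Longrightarrow> k t \<le> k s"
    and k_integrable: "(\<lambda>s. k s / s) integrable_on {1..}"
begin

definition mass :: real
  where "mass = integral {1..} (\<lambda>s. k s / s)"

lemma kernel_nonneg: "1 \<le> s \<Longrightarrow> 0 \<le> k s / s"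
  using k_pos[of s] by simp

lemma mass_nonneg: "0 \<le> mass"
  unfolding mass_def using k_integrable kernel_nonneg by (intro integral_nonneg) auto

lemma integrable_on_tail: "1 \<le> u \<Longrightarrow> (\<lambda>s. k s / s) integrable_on {u..}"
  using nonneg_integrable_on_atLeast_mono(1)[OF k_integrable] kernel_nonneg by blast

lemma integral_tail_le_mass: "1 \<le> u \<Longrightarrow> integral {u..} (\<lambda>s. k s / s) \<le> mass"
  unfolding mass_def
  using nonneg_integrable_on_atLeast_mono(2)[OF k_integrable] kernel_nonneg by blast

lemma integral_initial_le_mass:
  assumes "1 \<le> t"
  shows "(\<lambda>s. k s / s) integrable_on {1..t}" and "integral {1..t} (\<lambda>s. k s / s) \<le> mass"
proof -
  show kt: "(\<lambda>s. k s / s) integrable_on {1..t}"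
    by (rule integrable_on_subinterval[OF k_integrable]) auto
  show "integral {1..t} (\<lambda>s. k s / s) \<le> mass"
    unfolding mass_def
    by (rule integral_subset_le[OF _ kt k_integrable]) (use kernel_nonneg in auto)
qed

lemma weighted_tail_integral_le:
  fixes x :: "real \<Rightarrow> real"
  assumes "0 \<le> a" "0 \<le> C" "0 \<le> e"
    and x_le: "\<And>s. 1 \<le> s \<Longrightarrow> x s \<le> a * (C + e * s)"
    and u: "1 \<le> u"
  shows "integral {u..} (\<lambda>s. x s * k s / s\<^sup>2) \<le> a * C * (k u / u) + a * e * mass"
proof (cases "(\<lambda>s. x s * k s / s\<^sup>2) integrable_on {u..}")
  case False
  have "0 \<le> a * C * (k u / u) + a * e * mass"
    using assms mass_nonneg kernel_nonneg[OF u] by (intro add_nonneg_nonneg mult_nonneg_nonneg)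
  with False show ?thesis by (simp add: not_integrable_integral)
next
  case True
  let ?g = "\<lambda>s. a * C * k u * (1 / s\<^sup>2) + a * e * (k s / s)"
  have "((\<lambda>s. 1 / s\<^sup>2) has_integral 1 / u) {u..}"
    using has_integral_inverse_power_to_inf[of 2 u] u by simp
  then have g: "(?g has_integral a * C * k u * (1 / u) + a * e * integral {u..} (\<lambda>s. k s / s)) {u..}"
    using integrable_on_tail[OF u]
    by (intro has_integral_add has_integral_mult_right integrable_integral)
  have "integral {u..} (\<lambda>s. x s * k s / s\<^sup>2) \<le> integral {u..} ?g"
  proof (rule integral_le[OF True has_integral_integrable[OF g]])
    fix s assume "s \<in> {u..}"
    then have s: "1 \<le> s" "u \<le> s" using u by auto
    have "x s * k s / s\<^sup>2 \<le> a * (C + e * s) * k s / s\<^sup>2"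
      using x_le[OF s(1)] k_pos[OF s(1)] by (simp add: divide_right_mono)
    also have "\<dots> = a * C * k s * (1 / s\<^sup>2) + a * e * (k s / s)"
      using s by (simp add: field_simps power2_eq_square)
    also have "\<dots> \<le> ?g s"
      using k_antimono[OF u s(2)] assms
      by (intro add_mono[OF _ order_refl] mult_right_mono mult_left_mono) auto
    finally show "x s * k s / s\<^sup>2 \<le> ?g s" .
  qed
  also have "\<dots> \<le> a * C * (k u / u) + a * e * mass"
    using integral_unique[OF g] integral_tail_le_mass[OF u] assms by (simp add: mult_left_mono)
  finally show ?thesis .
qed

end

locale kernel_subsolution = nonincreasing_kernel +
  fixes x x' :: "real \<Rightarrow> real"
  assumes x_deriv: "\<And>t. 1 \<le> t \<Longrightarrow> (x has_real_derivative x' t) (at t within {1..})"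
    and x'_le: "\<And>t. 1 \<le> t \<Longrightarrow> x' t \<le> integral {t..} (\<lambda>s. x s * k s / s\<^sup>2)"
begin

lemma linear_bound_improve:
  assumes "0 \<le> a" "0 \<le> C" "0 \<le> e"
    and x_le: "\<And>s. 1 \<le> s \<Longrightarrow> x s \<le> a * (C + e * s)"
    and t: "1 \<le> t"
  shows "x t \<le> x 1 + a * C * mass + a * e * mass * t"
proof -
  let ?h = "\<lambda>s. a * C * (k s / s) + a * e * mass"
  have h: "(?h has_integral a * C * integral {1..t} (\<lambda>s. k s / s) + (t - 1) * (a * e * mass)) {1..t}"
    using integral_initial_le_mass(1)[OF t] has_integral_const_real[of "a * e * mass" 1 t] t
    by (intro has_integral_add has_integral_mult_right integrable_integral) auto
  have "x t - x 1 \<le> a * C * integral {1..t} (\<lambda>s. k s / s) + (t - 1) * (a * e * mass)"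
  proof (rule increment_le_integral_if_deriv_le[OF t _ h])
    fix s assume s: "s \<in> {1..t}"
    show "(x has_real_derivative x' s) (at s within {1..t})"
      using x_deriv[of s] s by (auto intro: DERIV_subset)
    show "x' s \<le> ?h s"
      using x'_le[of s] weighted_tail_integral_le[OF assms(1-4), of s] s by simp
  qed
  also have "\<dots> \<le> a * C * mass + t * (a * e * mass)"
    using integral_initial_le_mass(2)[OF t] assms mass_nonneg
    by (intro add_mono mult_left_mono mult_right_mono) auto
  finally show ?thesis by (simp add: algebra_simps)
qed

lemma bounded_by_initial_value:
  assumes x1: "0 \<le> x 1"
    and x_le: "\<And>s. 1 \<le> s \<Longrightarrow> x s \<le> s * x 1"
    and mass_lt: "mass < 1"
    and t: "1 \<le> t"
  shows "x t \<le> x 1 / (1 - mass)"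
proof -
  define C where "C = 1 / (1 - mass)"
  have "0 \<le> C" and fixed_point: "1 + C * mass = C"
    using mass_lt by (simp_all add: C_def field_simps)
  have iterate: "x s \<le> x 1 * (C + mass ^ n * s)" if "1 \<le> s" for s n
    using that
  proof (induction n arbitrary: s)
    case 0
    then show ?case using x_le[of s] mult_nonneg_nonneg[OF x1 \<open>0 \<le> C\<close>] by (simp add: algebra_simps)
  next
    case (Suc n)
    have "x s \<le> x 1 + x 1 * C * mass + x 1 * mass ^ n * mass * s"
      using linear_bound_improve[OF x1 \<open>0 \<le> C\<close> _ Suc.IH Suc.prems] mass_nonneg by simp
    also have "\<dots> = x 1 * (C + mass ^ Suc n * s)"
      using arg_cong[OF fixed_point, of "\<lambda>c. x 1 * c"] by (simp add: algebra_simps)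
    finally show ?case .
  qed
  have "(\<lambda>n. x 1 * (C + mass ^ n * t)) \<longlonglongrightarrow> x 1 * (C + 0 * t)"
    using mass_lt mass_nonneg by (intro tendsto_intros) simp
  then have "x t \<le> x 1 * C"
    using iterate[OF t] by (intro LIMSEQ_le_const[where a = "x t"]) auto
  then show ?thesis by (simp add: C_def)
qed

end

theorem lemma4p12:
  fixes k :: "real \<Rightarrow> real"
  assumes k_pos: "\<And>s. s \<ge> 1 \<Longrightarrow> k s > 0"
    and k_noninc: "\<And>s t. 1 \<le> s \<Longrightarrow> s \<le> t \<Longrightarrow> k t \<le> k s"
    and k_int: "(\<lambda>s. k s / s) integrable_on {1..}"
    and k_small: "integral {1..} (\<lambda>s. k s / s) < 1 / 10"
  shows "\<exists>C>0. \<forall>(x :: real \<Rightarrow> real) (x' :: real \<Rightarrow> real).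
           (\<forall>t\<ge>1. x t > 0) \<and>
           (\<forall>t\<ge>1. (x has_real_derivative x' t) (at t within {1..})) \<and>
           (\<forall>t\<ge>1. x t \<le> t * x 1) \<and>
           (\<forall>t\<ge>1. x' t \<le> integral {t..} (\<lambda>s. x s * k s / s\<^sup>2))
           \<longrightarrow> (\<forall>t\<ge>1. x t \<le> C * x 1)"
proof -
  interpret nonincreasing_kernel k
    using assms by unfold_locales auto
  have mass_lt: "mass < 1"
    using k_small by (simp add: mass_def)
  show ?thesis
  proof (intro exI[of _ "1 / (1 - mass)"] conjI allI impI)
    show "0 < 1 / (1 - mass)" using mass_lt by simp
    fix x x' :: "real \<Rightarrow> real" and t :: real
    assume x: "(\<forall>t\<ge>1. x t > 0) \<and>
           (\<forall>t\<ge>1. (x has_real_derivative x' t) (at t within {1..})) \<and>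
           (\<forall>t\<ge>1. x t \<le> t * x 1) \<and>
           (\<forall>t\<ge>1. x' t \<le> integral {t..} (\<lambda>s. x s * k s / s\<^sup>2))"
      and t: "1 \<le> t"
    interpret kernel_subsolution k x x'
      using x by unfold_locales auto
    have "0 < x 1" using x by simp
    then show "x t \<le> 1 / (1 - mass) * x 1"
      using bounded_by_initial_value[OF less_imp_le _ mass_lt t] x by simp
  qed
qed

end
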